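(* Let $n>10$, $S=\{1,2,5\}\subset\mathbb Z_n$, and $\mathbb K$ a field of characteristic $0$ containing the $n$-th roots of unity; fix $\lambda$ with $\lambda^n=1$. For $m\ge2$ define \[A_m:=f^{(\lambda)}_{1,1,\dots,1},\quad B_m:=\sum_{i=0}^{m-1}(-1)^{m-1-i}f^{(\lambda)}_{1^i,2,1^{m-1-i}},\quad C_m:=\sum_{i=0}^{m-1}(-1)^{m-1-i}f^{(\lambda)}_{1^i,5,1^{m-1-i}},\quad D_m:=\sum_{w\in\mathrm{Sh}(1^{m-2},2,5)}(-1)^{\mathrm{inv}(w)}f^{(\lambda)}_w.\] Then $\Omega_m^{(\lambda)}(\vec C_n^{1,2,5})=\mathrm{Span}\{A_m,B_m,C_m,D_m\}$ and $\dim\Omega_m^{(\lambda)}=4$.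
   Context: GLMY path complex over a field $\mathbb K$ of characteristic $0$: elementary paths $e_{v_0\cdots v_n}$, boundary $\partial e_{v_0\cdots v_n}=\sum_{j}(-1)^j e_{v_0\cdots\widehat{v_j}\cdots v_n}$, paths with two equal consecutive vertices set to $0$; $A_n(G)$ = span of paths along arrows of $G$; $\Omega_0=A_0$, $\Omega_1=A_1$, $\Omega_n=\{u\in A_n:\partial u\in A_{n-1}\}$. The circulant digraph $\vec{C}_n^S$ has vertex set $\mathbb Z_n$ and arrows $a\to a+s$, $s\in S$. $\tau$ is induced by $a\mapsto a+1$; $\Omega_m^{(\lambda)}=\{\alpha\in\Omega_m:\tau\alpha=\lambda\alpha\}$. For a word $w=(s_1,\dots,s_m)\in S^m$, $f_w^{(\lambda)}=\sum_{a\in\mathbb Z_n}\lambda^{-a}e_{a,a+s_1,\ldots,a+s_1+\cdots+s_m}$; $1^i$ denotes $i$ consecutive letters $1$. $\mathrm{Sh}(1^{m-2},2,5)$ is the set of all rearrangements of $m-2$ ones, one $2$ and one $5$; $\mathrm{inv}(w)$ is the number of pairs $i<j$ with $w_i>w_j$ in the order $1<2<5$. *)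

theory Defs
  imports Complex_Main "HOL-Library.Function_Algebras" "HOL-Library.Multiset"
begin

(* Chains: an m-chain over the field 'a is a function from vertex lists
   (elementary paths e_{v0...vm}, vertices in Z_n represented by {0..<n})
   to coefficients; e_p corresponds to the indicator of p. *)

type_synonym 'a chain = "nat list \<Rightarrow> 'a"

definition chain_scale :: "'a::field \<Rightarrow> 'a chain \<Rightarrow> 'a chain" where
  "chain_scale c u = (\<lambda>p. c * u p)"

definition regular :: "nat list \<Rightarrow> bool" where
  "regular p \<longleftrightarrow> (\<forall>i. Suc i < length p \<longrightarrow> p ! i \<noteq> p ! Suc i)"

definition paths :: "nat \<Rightarrow> nat \<Rightarrow> nat list set" where
  "paths n m = {p. length p = Suc m \<and> set p \<subseteq> {..<n} \<and> regular p}"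

definition allowed :: "nat \<Rightarrow> nat set \<Rightarrow> nat list \<Rightarrow> bool" where
  "allowed n S p \<longleftrightarrow> set p \<subseteq> {..<n} \<and> regular p \<and>
     (\<forall>i. Suc i < length p \<longrightarrow> (\<exists>s\<in>S. p ! Suc i = (p ! i + s) mod n))"

definition A_space :: "nat \<Rightarrow> nat set \<Rightarrow> nat \<Rightarrow> ('a::field) chain set" where
  "A_space n S m = {u. \<forall>p. u p \<noteq> 0 \<longrightarrow> length p = Suc m \<and> allowed n S p}"

(* GLMY boundary of an m-chain (regular paths; non-regular faces are set to 0) *)
definition boundary :: "nat \<Rightarrow> nat \<Rightarrow> ('a::field) chain \<Rightarrow> 'a chain" where
  "boundary n m u = (\<lambda>q. if regular q then
      (\<Sum>p\<in>paths n m. \<Sum>j\<in>{..m}.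
         if take j p @ drop (Suc j) p = q then (-1) ^ j * u p else 0)
    else 0)"

definition Omega :: "nat \<Rightarrow> nat set \<Rightarrow> nat \<Rightarrow> ('a::field) chain set" where
  "Omega n S m = (if m = 0 then A_space n S 0
     else {u \<in> A_space n S m. boundary n m u \<in> A_space n S (m - 1)})"

(* tau induced by a |-> a+1: tau e_p = e_{p+1} *)
definition tau :: "nat \<Rightarrow> ('a::field) chain \<Rightarrow> 'a chain" where
  "tau n u = (\<lambda>p. if set p \<subseteq> {..<n} then u (map (\<lambda>v. (v + n - 1) mod n) p) else 0)"

definition Omega_eig :: "nat \<Rightarrow> nat set \<Rightarrow> nat \<Rightarrow> 'a::field \<Rightarrow> 'a chain set" where
  "Omega_eig n S m lam = {\<alpha> \<in> Omega n S m. tau n \<alpha> = chain_scale lam \<alpha>}"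

fun walk :: "nat \<Rightarrow> nat \<Rightarrow> nat list \<Rightarrow> nat list" where
  "walk n a [] = [a]"
| "walk n a (s # w) = a # walk n ((a + s) mod n) w"

definition fw :: "nat \<Rightarrow> 'a::field \<Rightarrow> nat list \<Rightarrow> 'a chain" where
  "fw n lam w = (\<lambda>q. \<Sum>a<n. if q = walk n a w then inverse lam ^ a else 0)"

definition word_i :: "nat \<Rightarrow> nat \<Rightarrow> nat \<Rightarrow> nat list" where
  "word_i m s i = replicate i 1 @ [s] @ replicate (m - 1 - i) 1"

definition Amw :: "nat \<Rightarrow> 'a::field \<Rightarrow> nat \<Rightarrow> 'a chain" where
  "Amw n lam m = fw n lam (replicate m 1)"

definition Bsw :: "nat \<Rightarrow> 'a::field \<Rightarrow> nat \<Rightarrow> nat \<Rightarrow> 'a chain" where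
  "Bsw n lam s m = (\<lambda>q. \<Sum>i<m. (-1) ^ (m - 1 - i) * fw n lam (word_i m s i) q)"

definition Sh :: "nat \<Rightarrow> nat list set" where
  "Sh m = {w. length w = m \<and> mset w = replicate_mset (m - 2) 1 + {#2, 5#}}"

definition inv :: "nat list \<Rightarrow> nat" where
  "inv w = card {(i, j). i < j \<and> j < length w \<and> w ! i > w ! j}"

definition Dmw :: "nat \<Rightarrow> 'a::field \<Rightarrow> nat \<Rightarrow> 'a chain" where
  "Dmw n lam m = (\<lambda>q. \<Sum>w\<in>Sh m. (-1) ^ inv w * fw n lam w q)"

end

theory Submission
  imports Defs
begin

section \<open>Walks\<close>

lemma regular_iff_distinct_adj: "regular p \<longleftrightarrow> distinct_adj p"
  by (simp add: regular_def distinct_adj_conv_nth)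

lemma allowed_iff_successively:
  "allowed n S p \<longleftrightarrow>
     set p \<subseteq> {..<n} \<and> successively (\<lambda>x y. x \<noteq> y \<and> (\<exists>s\<in>S. y = (x + s) mod n)) p"
  by (auto simp: allowed_def regular_def successively_conv_nth)

lemma allowed_Cons_Cons [simp]:
  "allowed n S (x # y # p) \<longleftrightarrow>
     x < n \<and> x \<noteq> y \<and> (\<exists>s\<in>S. y = (x + s) mod n) \<and> allowed n S (y # p)"
  by (auto simp: allowed_iff_successively)

lemma allowed_singleton [simp]: "allowed n S [x] \<longleftrightarrow> x < n"
  by (simp add: allowed_iff_successively)

lemma mod_add_left_inj:
  fixes a s s' n :: nat
  assumes "(a + s) mod n = (a + s') mod n" "s < n" "s' < n"
  shows "s = s'"
proof -
  have le_case: "s = s'" if "(a + s) mod n = (a + s') mod n" "s \<le> s'" "s' < n" for s s'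
  proof -
    have "n dvd s' - s"
      using mod_eq_dvd_iff_nat[of "a + s" "a + s'" n] that by simp
    moreover have "s' - s < n"
      using that(3) by linarith
    ultimately have "\<not> 0 < s' - s"
      using nat_dvd_not_less by blast
    then show ?thesis
      using that(2) by simp
  qed
  show ?thesis
  proof (cases "s \<le> s'")
    case True
    then show ?thesis
      using le_case[OF assms(1) _ assms(3)] by blast
  next
    case False
    then show ?thesis
      using le_case[OF assms(1)[symmetric] _ assms(2)] by simp
  qed
qed

lemma length_walk [simp]: "length (walk n a w) = Suc (length w)"
  by (induction w arbitrary: a) auto

lemma walk_eq_Cons: "walk n a w = a # tl (walk n a w)"
  by (cases w) auto

lemma walk_neq_Nil [simp]: "walk n a w \<noteq> []" "[] \<noteq> walk n a w"
  by (cases w; simp)+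

lemma hd_walk [simp]: "hd (walk n a w) = a"
  by (cases w) auto

lemma walk_inj:
  assumes "walk n a w = walk n b v" "set w \<subseteq> {..<n}" "set v \<subseteq> {..<n}"
  shows "a = b \<and> w = v"
  using assms
proof (induction w arbitrary: a b v)
  case Nil
  then show ?case by (cases v) auto
next
  case (Cons s w)
  then obtain s' v' where v: "v = s' # v'"
    by (cases v) (auto dest: arg_cong[where f = length])
  with Cons.prems have "a = b" "walk n ((a + s) mod n) w = walk n ((a + s') mod n) v'"
    by auto
  with Cons.IH Cons.prems v have "(a + s) mod n = (a + s') mod n" "w = v'"
    by auto
  with Cons.prems v \<open>a = b\<close> show ?case
    using mod_add_left_inj[of a s n s'] by auto
qed

lemma set_walk: "a < n \<Longrightarrow> set (walk n a w) \<subseteq> {..<n}"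
  by (induction w arbitrary: a) auto

lemma allowed_walk_iff:
  assumes "a < n" "set w \<subseteq> {..<n}" "S \<subseteq> {0<..<n}"
  shows "allowed n S (walk n a w) \<longleftrightarrow> set w \<subseteq> S"
  using assms
proof (induction w arbitrary: a)
  case (Cons s w)
  have s_lt: "s < n" and S_bounds: "\<And>s'. s' \<in> S \<Longrightarrow> 0 < s' \<and> s' < n"
    using Cons.prems(2,3) by auto
  have step: "(\<exists>s'\<in>S. (a + s) mod n = (a + s') mod n) \<longleftrightarrow> s \<in> S"
    using mod_add_left_inj[of a s n] s_lt S_bounds by blast
  have loop_free: "(a + s) mod n \<noteq> a" if "s \<in> S"
  proof
    assume "(a + s) mod n = a"
    then have "(a + s) mod n = (a + 0) mod n"
      using Cons.prems(1) by simp
    then show False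
      using mod_add_left_inj[of a s n 0] s_lt S_bounds[OF that] by simp
  qed
  have tail: "allowed n S (walk n ((a + s) mod n) w) \<longleftrightarrow> set w \<subseteq> S"
    using Cons by simp
  obtain t where t: "walk n ((a + s) mod n) w = (a + s) mod n # t"
    using walk_eq_Cons by blast
  have "allowed n S (walk n a (s # w)) \<longleftrightarrow> (a + s) mod n \<noteq> a \<and>
      (\<exists>s'\<in>S. (a + s) mod n = (a + s') mod n) \<and> allowed n S (walk n ((a + s) mod n) w)"
    using Cons.prems(1) by (simp only: walk.simps t allowed_Cons_Cons) fastforce
  also have "\<dots> \<longleftrightarrow> s \<in> S \<and> set w \<subseteq> S"
    using step loop_free tail by blast
  finally show ?case
    by simp
qed simp

lemma allowed_imp_walk:
  assumes "allowed n S p" "p \<noteq> []"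
  shows "\<exists>a w. a < n \<and> set w \<subseteq> S \<and> p = walk n a w"
  using assms
proof (induction p rule: induct_list012)
  case (2 x)
  then show ?case
    by (intro exI[of _ x] exI[of _ "[]"]) simp
next
  case (3 x y p)
  then obtain s where s: "s \<in> S" "y = (x + s) mod n" and "x < n"
    by auto
  moreover obtain b v where "set v \<subseteq> S" "y # p = walk n b v"
    using 3 by auto
  moreover have "b = y"
    using hd_walk[of n b v] \<open>y # p = walk n b v\<close> by (metis list.sel(1))
  ultimately show ?case
    by (intro exI[of _ x] exI[of _ "s # v"]) auto
qed simp

lemma walk_shift: "map (\<lambda>v. (v + k) mod n) (walk n b w) = walk n ((b + k) mod n) w"
  by (induction w arbitrary: b) (simp_all add: mod_add_left_eq mod_add_right_eq ac_simps)

fun face :: "nat \<Rightarrow> 'b list \<Rightarrow> 'b list" where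
  "face _ [] = []"
| "face 0 (x # p) = p"
| "face (Suc j) (x # p) = x # face j p"

lemma take_drop_eq_face: "take j p @ drop (Suc j) p = face j p"
  by (induction j p rule: face.induct) simp_all

lemma length_face: "j < length p \<Longrightarrow> length (face j p) = length p - 1"
  by (induction j p rule: face.induct) simp_all

lemma length_face_le: "length (face j p) \<le> length p"
  by (induction j p rule: face.induct) simp_all

lemma face_walk_last: "w \<noteq> [] \<Longrightarrow> face (length w) (walk n a w) = walk n a (butlast w)"
proof (induction w arbitrary: a)
  case (Cons s w)
  then show ?case
    by (cases w) simp_all
qed simp

lemma face_walk_merge:
  "face (Suc (length pre)) (walk n a (pre @ s # s' # suf)) = walk n a (pre @ (s + s') # suf)"
  by (induction pre arbitrary: a) (simp_all add: mod_add_left_eq add.assoc)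

lemma face_walk_cases:
  assumes "w \<noteq> []" "j \<le> length w"
  obtains (first) s v where "j = 0" "w = s # v" "face j (walk n a w) = walk n ((a + s) mod n) v"
  | (last) "j = length w" "face j (walk n a w) = walk n a (butlast w)"
  | (merge) pre s s' suf where "w = pre @ s # s' # suf" "j = Suc (length pre)"
      "face j (walk n a w) = walk n a (pre @ (s + s') # suf)"
proof -
  consider "j = 0" | "j = length w" | "0 < j" "j < length w"
    using assms(2) by linarith
  then show thesis
  proof cases
    case 1
    obtain s v where w: "w = s # v"
      using assms(1) by (cases w) auto
    show thesis
      by (rule that(1)[OF 1 w]) (simp add: 1 w)
  next
    case 2
    show thesis
      by (rule that(2)[OF 2]) (simp add: 2 face_walk_last assms(1))
  next
    case 3
    obtain pre s s' suf where w: "w = pre @ s # s' # suf" and pre: "length pre = j - 1"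
    proof
      have "drop (j - 1) w = w ! (j - 1) # drop j w"
        using Cons_nth_drop_Suc[of "j - 1" w] 3 by simp
      moreover have "drop j w = w ! j # drop (Suc j) w"
        using Cons_nth_drop_Suc[of j w] 3 by simp
      ultimately show "w = take (j - 1) w @ w ! (j - 1) # w ! j # drop (Suc j) w"
        by (metis append_take_drop_id)
    qed (use 3 in simp)
    have j: "j = Suc (length pre)"
      using 3 pre by simp
    have "face j (walk n a w) = walk n a (pre @ (s + s') # suf)"
      unfolding w j by (rule face_walk_merge)
    with w j show thesis
      by (rule that(3))
  qed
qed

section \<open>Chains that are eigenvectors of the rotation\<close>

interpretation chain: vector_space "chain_scale :: 'a::field \<Rightarrow> 'a chain \<Rightarrow> 'a chain"
  by unfold_locales (auto simp: chain_scale_def fun_eq_iff algebra_simps)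

lemma chain_scale_apply [simp]: "chain_scale c u p = c * u p"
  by (simp add: chain_scale_def)

lemma sum_fun_apply: "(\<Sum>i\<in>I. f i) x = (\<Sum>i\<in>I. f i x)"
  by (induction I rule: infinite_finite_induct) auto

lemma subspace_A_space: "chain.subspace (A_space n S m)"
  unfolding chain.subspace_def A_space_def by auto (metis add.left_neutral)+

lemma tau_add: "tau n (u + v) = tau n u + tau n v"
  unfolding tau_def by auto

lemma tau_scale: "tau n (chain_scale c u) = chain_scale c (tau n u)"
  unfolding tau_def by auto

lemma subspace_rotation_eigen:
  "chain.subspace V \<Longrightarrow> chain.subspace {u \<in> V. tau n u = chain_scale lam u}"
  unfolding chain.subspace_def
  by (auto simp: tau_add tau_scale fun_eq_iff algebra_simps simp del: chain_scale_apply)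
    (auto simp: tau_def)

lemma boundary_add: "boundary n m (u + v) = boundary n m u + boundary n m v"
  unfolding boundary_def by (auto simp: fun_eq_iff sum.distrib[symmetric] distrib_left intro!: sum.cong)

lemma boundary_scale: "boundary n m (chain_scale c u) = chain_scale c (boundary n m u)"
  unfolding boundary_def chain_scale_def by (auto simp: fun_eq_iff sum_distrib_left intro!: sum.cong)

lemma boundary_zero: "boundary n m 0 = 0"
  by (simp add: boundary_def fun_eq_iff cong: if_cong)

lemma subspace_Omega: "chain.subspace (Omega n S m)"
proof (cases "m = 0")
  case False
  then show ?thesis
    using subspace_A_space[of n S m] subspace_A_space[of n S "m - 1"]
    unfolding Omega_def chain.subspace_def
    by (auto simp: boundary_add boundary_scale boundary_zero simp del: chain_scale_apply)
qed (simp add: Omega_def subspace_A_space)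

lemma subspace_Omega_eig: "chain.subspace (Omega_eig n S m lam)"
  unfolding Omega_eig_def by (rule subspace_rotation_eigen[OF subspace_Omega])

definition words :: "nat set \<Rightarrow> nat \<Rightarrow> nat list set" where
  "words S m = {w. set w \<subseteq> S \<and> length w = m}"

lemma append_Cons_Cons_in_words_iff:
  "pre @ x # y # suf \<in> words S m \<longleftrightarrow>
    set pre \<subseteq> S \<and> set suf \<subseteq> S \<and> x \<in> S \<and> y \<in> S \<and> length pre + length suf + 2 = m"
  unfolding words_def by auto

lemma append_swap_in_words_iff:
  "pre @ x # y # suf \<in> words S m \<longleftrightarrow> pre @ y # x # suf \<in> words S m"
  unfolding append_Cons_Cons_in_words_iff by blast

lemma finite_words: "finite S \<Longrightarrow> finite (words S m)"
  unfolding words_def by (rule finite_lists_length_eq)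

definition A_eig :: "nat \<Rightarrow> nat set \<Rightarrow> nat \<Rightarrow> 'a::field \<Rightarrow> 'a chain set" where
  "A_eig n S m lam = {u \<in> A_space n S m. tau n u = chain_scale lam u}"

definition walk_coeff :: "nat \<Rightarrow> nat set \<Rightarrow> nat \<Rightarrow> 'a::field chain \<Rightarrow> nat list \<Rightarrow> 'a" where
  "walk_coeff n S m u w = (if w \<in> words S m then u (walk n 0 w) else 0)"

lemma subspace_A_eig: "chain.subspace (A_eig n S m lam)"
  unfolding A_eig_def by (rule subspace_rotation_eigen[OF subspace_A_space])

lemma Omega_eig_subset_A_eig: "Omega_eig n S m lam \<subseteq> A_eig n S m lam"
  unfolding Omega_eig_def A_eig_def Omega_def by auto

lemma A_space_support:
  assumes "u \<in> A_space n S m" "u p \<noteq> 0"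
  shows "\<exists>a<n. \<exists>w\<in>words S m. p = walk n a w"
proof -
  have p: "length p = Suc m" "allowed n S p"
    using assms unfolding A_space_def by auto
  moreover have "p \<noteq> []"
    using p(1) by auto
  ultimately obtain a w where "a < n" "set w \<subseteq> S" "p = walk n a w"
    using allowed_imp_walk[of n S p] by blast
  with p(1) show ?thesis
    unfolding words_def by auto
qed

lemma fw_walk:
  assumes "a < n" "set w \<subseteq> {..<n}" "set v \<subseteq> {..<n}"
  shows "fw n lam v (walk n a w) = (if v = w then inverse lam ^ a else 0)"
proof -
  have "walk n a w = walk n b v \<longleftrightarrow> b = a \<and> v = w" for b
    using walk_inj[of n a w b v] assms(2,3) by auto
  then have "fw n lam v (walk n a w) = (\<Sum>b<n. if b = a \<and> v = w then inverse lam ^ b else 0)"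
    unfolding fw_def by simp
  also have "\<dots> = (if v = w then inverse lam ^ a else 0)"
    using assms(1) by (simp add: sum.delta)
  finally show ?thesis .
qed

lemma fw_eq_0: "(\<And>a. a < n \<Longrightarrow> q \<noteq> walk n a w) \<Longrightarrow> fw n lam w q = 0"
  unfolding fw_def by (intro sum.neutral) auto

lemma walk_shift_back:
  "a < n \<Longrightarrow> map (\<lambda>v. (v + n - 1) mod n) (walk n a w) = walk n ((a + n - 1) mod n) w"
  using walk_shift[of "n - 1" n a w] by simp

lemma shift_forward_back:
  fixes v n :: nat
  assumes "v < n"
  shows "((v + n - 1) mod n + 1) mod n = v"
proof -
  have "((v + n - 1) mod n + 1) mod n = (v + n - 1 + 1) mod n"
    by (rule mod_add_left_eq)
  also have "v + n - 1 + 1 = v + n"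
    using assms by simp
  finally show ?thesis
    using assms by simp
qed

lemma inverse_power_shift_back:
  fixes lam :: "'a::field"
  assumes "lam ^ n = 1" "a < n"
  shows "inverse lam ^ ((a + n - 1) mod n) = lam * inverse lam ^ a"
proof (cases a)
  case 0
  have "lam ^ (n - 1) * lam = 1"
    using assms power_minus_mult[of n lam] by simp
  then have "inverse lam ^ (n - 1) = lam"
    by (metis inverse_unique power_inverse)
  with 0 assms(2) show ?thesis
    by simp
next
  case (Suc b)
  have "lam \<noteq> 0"
    using assms by (metis gr_implies_not0 power_0_left zero_neq_one)
  with Suc assms(2) show ?thesis
    by (simp add: field_simps)
qed

lemma tau_fw:
  fixes lam :: "'a::field"
  assumes "lam ^ n = 1" "set w \<subseteq> {..<n}"
  shows "tau n (fw n lam w) = chain_scale lam (fw n lam w)"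
proof
  fix q
  show "tau n (fw n lam w) q = chain_scale lam (fw n lam w) q"
  proof (cases "\<exists>a<n. q = walk n a w")
    case True
    then obtain a where a: "a < n" "q = walk n a w"
      by blast
    have "tau n (fw n lam w) q = fw n lam w (walk n ((a + n - 1) mod n) w)"
      unfolding tau_def a(2)
      by (simp only: walk_shift_back[OF a(1)] set_walk[OF a(1)] if_True)
    also have "\<dots> = inverse lam ^ ((a + n - 1) mod n)"
      using fw_walk[of "(a + n - 1) mod n" n w w lam] a(1) assms(2) by simp
    also have "\<dots> = chain_scale lam (fw n lam w) q"
      using fw_walk[of a n w w lam] a assms inverse_power_shift_back[OF assms(1) a(1)] by simp
    finally show ?thesis .
  next
    case False
    have "fw n lam w (map (\<lambda>v. (v + n - 1) mod n) q) = 0" if "set q \<subseteq> {..<n}"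
    proof (rule fw_eq_0)
      fix b assume "b < n"
      have forward_back: "map (\<lambda>v. (v + 1) mod n) (map (\<lambda>v. (v + n - 1) mod n) q) = q"
        unfolding map_map comp_def using that by (intro map_idI shift_forward_back) auto
      show "map (\<lambda>v. (v + n - 1) mod n) q \<noteq> walk n b w"
      proof
        assume "map (\<lambda>v. (v + n - 1) mod n) q = walk n b w"
        with forward_back have "q = walk n ((b + 1) mod n) w"
          using walk_shift[of 1 n b w] by metis
        moreover have "(b + 1) mod n < n"
          using \<open>b < n\<close> by simp
        ultimately show False
          using False by blast
      qed
    qed
    with False show ?thesis
      by (auto simp: tau_def fw_eq_0)
  qed
qed

lemma subspace_lincomb:
  assumes "chain.subspace V" "\<And>i. i \<in> I \<Longrightarrow> f i \<in> V"
  shows "(\<lambda>q. \<Sum>i\<in>I. k i * f i q) \<in> V"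
proof -
  have "(\<lambda>q. \<Sum>i\<in>I. k i * f i q) = (\<Sum>i\<in>I. chain_scale (k i) (f i))"
    by (simp add: fun_eq_iff sum_fun_apply)
  then show ?thesis
    using assms by (simp add: chain.subspace_sum chain.subspace_scale)
qed

lemma walk_coeff_lincomb:
  "walk_coeff n S m (\<lambda>q. \<Sum>i\<in>I. k i * f i q) w = (\<Sum>i\<in>I. k i * walk_coeff n S m (f i) w)"
  by (simp add: walk_coeff_def)

definition splits :: "nat set \<Rightarrow> nat \<Rightarrow> (nat \<times> nat) set" where
  "splits S t = {(s, s'). s \<in> S \<and> s' \<in> S \<and> s + s' = t}"

definition merge_relations :: "nat set \<Rightarrow> nat \<Rightarrow> (nat list \<Rightarrow> 'a::comm_ring_1) \<Rightarrow> bool" where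
  "merge_relations S m c \<longleftrightarrow> (\<forall>pre suf t. set pre \<subseteq> S \<longrightarrow> set suf \<subseteq> S \<longrightarrow>
     length pre + length suf + 2 = m \<longrightarrow> t \<notin> S \<longrightarrow>
     (\<Sum>(s, s')\<in>splits S t. c (pre @ s # s' # suf)) = 0)"

lemma append_Cons_eq_append_Cons_notin:
  assumes "pre' @ x # suf' = pre @ t # suf" "set pre' \<subseteq> A" "set suf' \<subseteq> A" "t \<notin> A"
  shows "pre' = pre \<and> x = t \<and> suf' = suf"
proof -
  from assms(1) obtain us where
    "pre' = pre @ us \<and> us @ x # suf' = t # suf \<or> pre' @ us = pre \<and> x # suf' = us @ t # suf"
    by (auto simp: append_eq_append_conv2)
  then show ?thesis
  proof
    assume "pre' = pre @ us \<and> us @ x # suf' = t # suf"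
    with assms(2,4) show ?thesis
      by (cases us) auto
  next
    assume "pre' @ us = pre \<and> x # suf' = us @ t # suf"
    with assms(3,4) show ?thesis
      by (cases us) auto
  qed
qed

lemma walk_coeff_add: "walk_coeff n S m (u + v) w = walk_coeff n S m u w + walk_coeff n S m v w"
  by (simp add: walk_coeff_def)

lemma walk_coeff_scale: "walk_coeff n S m (chain_scale c u) w = c * walk_coeff n S m u w"
  by (simp add: walk_coeff_def)

lemma independent_if_private_points:
  assumes "finite B" and witness: "\<And>b. b \<in> B \<Longrightarrow> \<exists>p. b p \<noteq> 0 \<and> (\<forall>b'\<in>B. b' \<noteq> b \<longrightarrow> b' p = 0)"
  shows "chain.independent B"
proof
  assume "chain.dependent B"
  then obtain c b where b: "b \<in> B" "c b \<noteq> 0" and sum: "(\<Sum>v\<in>B. chain_scale (c v) v) = 0"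
    using chain.dependent_finite[OF assms(1)] by auto
  obtain p where p: "b p \<noteq> 0" "\<forall>b'\<in>B. b' \<noteq> b \<longrightarrow> b' p = 0"
    using witness[OF b(1)] by blast
  have "0 = (\<Sum>v\<in>B. c v * v p)"
    using fun_cong[OF sum, of p] by (simp add: sum_fun_apply)
  also have "\<dots> = c b * b p"
    using assms(1) b(1) p(2) by (simp add: sum.remove sum.neutral)
  finally show False
    using b(2) p(1) by simp
qed

locale circulant =
  fixes n :: nat and S :: "nat set" and lam :: "'a::field"
  assumes n_pos: "0 < n"
    and zero_notin_steps: "0 \<notin> S"
    and step_sums_lt: "s \<in> S \<Longrightarrow> s' \<in> S \<Longrightarrow> s + s' < n"
    and lam_root: "lam ^ n = 1"
begin

lemma steps_bounds: "S \<subseteq> {0<..<n}"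
proof
  fix s
  assume "s \<in> S"
  moreover have "s \<noteq> 0"
    using \<open>s \<in> S\<close> zero_notin_steps by metis
  ultimately have "s + s < n" and "s \<noteq> 0"
    using step_sums_lt by auto
  then show "s \<in> {0<..<n}"
    by simp
qed

lemma finite_steps: "finite S"
  using steps_bounds finite_subset by blast

lemma steps_lt: "set v \<subseteq> S \<Longrightarrow> set v \<subseteq> {..<n}"
  using steps_bounds by fastforce

lemma words_lt: "w \<in> words S m \<Longrightarrow> set w \<subseteq> {..<n}"
  using steps_lt unfolding words_def by auto

lemma lam_nonzero: "lam \<noteq> 0"
  using lam_root n_pos by (metis power_0_left zero_neq_one gr_implies_not0)

lemma A_eig_walk:
  assumes "u \<in> A_eig n S m lam" "a < n"
  shows "u (walk n a w) = inverse lam ^ a * u (walk n 0 w)"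
  using assms(2)
proof (induction a)
  case (Suc a)
  have "u (walk n a w) = tau n u (walk n (Suc a) w)"
    using set_walk[OF Suc.prems] walk_shift_back[OF Suc.prems] Suc.prems by (simp add: tau_def)
  also have "\<dots> = lam * u (walk n (Suc a) w)"
    using assms(1) unfolding A_eig_def by simp
  finally show ?case
    using Suc lam_nonzero by (simp add: field_simps)
qed simp

lemma A_eig_eqI:
  assumes "u \<in> A_eig n S m lam" "v \<in> A_eig n S m lam"
    and "walk_coeff n S m u = walk_coeff n S m v"
  shows "u = v"
proof
  fix p
  show "u p = v p"
  proof (cases "\<exists>a<n. \<exists>w\<in>words S m. p = walk n a w")
    case True
    then obtain a w where "a < n" "w \<in> words S m" "p = walk n a w"
      by blast
    with assms show ?thesis
      using A_eig_walk[OF assms(1) \<open>a < n\<close>] A_eig_walk[OF assms(2) \<open>a < n\<close>]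
        fun_cong[OF assms(3), of w]
      unfolding walk_coeff_def by simp
  next
    case False
    then have "u p = 0" "v p = 0"
      using assms(1,2) A_space_support[of u n S m p] A_space_support[of v n S m p]
      unfolding A_eig_def by blast+
    then show ?thesis
      by simp
  qed
qed

lemma fw_in_A_eig:
  assumes "w \<in> words S m"
  shows "fw n lam w \<in> A_eig n S m lam"
proof -
  have "fw n lam w \<in> A_space n S m"
    unfolding A_space_def
  proof (intro CollectI allI impI)
    fix p
    assume "fw n lam w p \<noteq> 0"
    then obtain a where "a < n" "p = walk n a w"
      using fw_eq_0 by blast
    then show "length p = Suc m \<and> allowed n S p"
      using assms allowed_walk_iff[of a n w S] words_lt steps_bounds unfolding words_def by auto
  qed
  then show ?thesis
    using tau_fw[OF lam_root words_lt[OF assms]] unfolding A_eig_def by simp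
qed

lemma walk_coeff_fw:
  assumes "v \<in> words S m"
  shows "walk_coeff n S m (fw n lam v) w = (if w = v then 1 else 0)"
proof (cases "w \<in> words S m")
  case True
  then show ?thesis
    using fw_walk[OF n_pos words_lt[OF True] words_lt[OF assms], of lam]
    unfolding walk_coeff_def by auto
next
  case False
  then show ?thesis
    using assms unfolding walk_coeff_def by auto
qed

lemma boundary_A_eig:
  assumes u: "u \<in> A_eig n S m lam" and q: "regular q"
  shows "boundary n m u q = (\<Sum>a<n. \<Sum>w\<in>words S m. \<Sum>j\<le>m.
           if face j (walk n a w) = q then (-1) ^ j * (inverse lam ^ a * walk_coeff n S m u w) else 0)"
proof -
  define G where "G p = (\<Sum>j\<le>m. if face j p = q then (-1) ^ j * u p else 0)" for p
  define walks where "walks = (\<lambda>(a, w). walk n a w) ` ({..<n} \<times> words S m)"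
  have "boundary n m u q = (\<Sum>p\<in>paths n m. G p)"
    unfolding boundary_def G_def using q by (simp add: take_drop_eq_face)
  also have "\<dots> = (\<Sum>p\<in>walks. G p)"
  proof (rule sum.mono_neutral_right)
    have "finite {p. set p \<subseteq> {..<n} \<and> length p = Suc m}"
      by (rule finite_lists_length_eq) simp
    then show "finite (paths n m)"
      unfolding paths_def by (rule rev_finite_subset) auto
    show "walks \<subseteq> paths n m"
    proof
      fix p
      assume "p \<in> walks"
      then obtain a w where aw: "a < n" "w \<in> words S m" "p = walk n a w"
        unfolding walks_def by auto
      then have "allowed n S p"
        using allowed_walk_iff[OF aw(1) words_lt[OF aw(2)] steps_bounds] by (simp add: words_def)
      with aw show "p \<in> paths n m"
        unfolding paths_def allowed_def words_def by simp
    qed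
    show "\<forall>p\<in>paths n m - walks. G p = 0"
    proof
      fix p
      assume "p \<in> paths n m - walks"
      then have "u p = 0"
        using A_space_support[of u n S m p] u unfolding A_eig_def walks_def by blast
      then show "G p = 0"
        unfolding G_def by (simp cong: if_cong)
    qed
  qed
  also have "\<dots> = (\<Sum>(a, w)\<in>{..<n} \<times> words S m. G (walk n a w))"
  proof -
    have "inj_on (\<lambda>(a, w). walk n a w) ({..<n} \<times> words S m)"
    proof (rule inj_onI, clarify)
      fix a w b v
      assume "w \<in> words S m" "v \<in> words S m" "walk n a w = walk n b v"
      then show "a = b \<and> w = v"
        using walk_inj words_lt by blast
    qed
    then show ?thesis
      unfolding walks_def by (simp add: sum.reindex prod.case_distrib)
  qed
  also have "\<dots> = (\<Sum>a<n. \<Sum>w\<in>words S m. G (walk n a w))"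
    by (rule sum.cartesian_product[symmetric])
  also have "\<dots> = (\<Sum>a<n. \<Sum>w\<in>words S m. \<Sum>j\<le>m.
           if face j (walk n a w) = q then (-1) ^ j * (inverse lam ^ a * walk_coeff n S m u w) else 0)"
  proof (intro sum.cong refl)
    fix a w
    assume "a \<in> {..<n}" "w \<in> words S m"
    then have "u (walk n a w) = inverse lam ^ a * walk_coeff n S m u w"
      using A_eig_walk[OF u, of a w] unfolding walk_coeff_def by simp
    then show "G (walk n a w) = (\<Sum>j\<le>m. if face j (walk n a w) = q
        then (-1) ^ j * (inverse lam ^ a * walk_coeff n S m u w) else 0)"
      unfolding G_def by (simp cong: if_cong)
  qed
  finally show ?thesis .
qed

lemma fw_lincomb_in_A_eig:
  "(\<And>i. i \<in> I \<Longrightarrow> ws i \<in> words S m) \<Longrightarrow> (\<lambda>q. \<Sum>i\<in>I. k i * fw n lam (ws i) q) \<in> A_eig n S m lam"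
  by (rule subspace_lincomb[OF subspace_A_eig fw_in_A_eig])

lemma walk_coeff_fw_lincomb:
  "(\<And>i. i \<in> I \<Longrightarrow> ws i \<in> words S m) \<Longrightarrow>
    walk_coeff n S m (\<lambda>q. \<Sum>i\<in>I. k i * fw n lam (ws i) q) w = (\<Sum>i\<in>I. if w = ws i then k i else 0)"
  unfolding walk_coeff_lincomb by (intro sum.cong refl) (simp add: walk_coeff_fw)

lemma allowed_walk:
  assumes "a < n" "set v \<subseteq> S"
  shows "allowed n S (walk n a v)"
  using allowed_walk_iff[OF assms(1) steps_lt[OF assms(2)] steps_bounds] assms(2) by blast

lemma splits_bounds: "(s, s') \<in> splits S t \<Longrightarrow> 0 < t \<and> t < n"
  using step_sums_lt steps_bounds unfolding splits_def by auto

lemma face_walk_eq_merged_iff: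
  assumes a: "a < n" and w: "w \<in> words S m" and j: "j \<le> m" and "b < n"
    and pre: "set pre \<subseteq> S" and suf: "set suf \<subseteq> S" and t: "t \<notin> S" "t < n"
  shows "face j (walk n a w) = walk n b (pre @ t # suf) \<longleftrightarrow>
    a = b \<and> j = Suc (length pre) \<and> (\<exists>(s, s')\<in>splits S t. w = pre @ s # s' # suf)"
proof
  assume eq: "face j (walk n a w) = walk n b (pre @ t # suf)"
  have ws: "set w \<subseteq> S" "length w = m"
    using w unfolding words_def by auto
  have merged_lt: "set (pre @ t # suf) \<subseteq> {..<n}"
    using pre suf t steps_bounds by auto
  have "w \<noteq> []"
  proof
    assume "w = []"
    then have "length (face j (walk n a w)) \<le> 1"
      using length_face_le[of j "walk n a w"] by simp
    with eq show False
      by simp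
  qed
  moreover have "j \<le> length w"
    using j ws(2) by simp
  ultimately show "a = b \<and> j = Suc (length pre) \<and> (\<exists>(s, s')\<in>splits S t. w = pre @ s # s' # suf)"
  proof (cases rule: face_walk_cases[where n = n and a = a])
    case (first s v)
    with eq ws(1) have "v = pre @ t # suf"
      using walk_inj[OF _ steps_lt merged_lt] by auto
    with first ws(1) t show ?thesis
      by auto
  next
    case last
    moreover have "set (butlast w) \<subseteq> S"
      using ws(1) by (auto dest: in_set_butlastD)
    ultimately have "butlast w = pre @ t # suf"
      using eq walk_inj[OF _ steps_lt merged_lt] by auto
    with ws(1) t show ?thesis
      by (metis in_set_butlastD in_set_conv_decomp subsetD)
  next
    case (merge pre' s s' suf')
    have steps: "s \<in> S" "s' \<in> S" "set pre' \<subseteq> S" "set suf' \<subseteq> S"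
      using ws(1) merge(1) by auto
    then have merged'_lt: "set (pre' @ (s + s') # suf') \<subseteq> {..<n}"
      using step_sums_lt steps_lt by auto
    from merge(3) eq have "walk n a (pre' @ (s + s') # suf') = walk n b (pre @ t # suf)"
      by simp
    then have "a = b \<and> pre' @ (s + s') # suf' = pre @ t # suf"
      using merged'_lt merged_lt by (rule walk_inj)
    then have "a = b" and "pre' = pre \<and> s + s' = t \<and> suf' = suf"
      using append_Cons_eq_append_Cons_notin[OF _ steps(3,4) t(1)] by blast+
    with merge steps show ?thesis
      unfolding splits_def by auto
  qed
next
  assume "a = b \<and> j = Suc (length pre) \<and> (\<exists>(s, s')\<in>splits S t. w = pre @ s # s' # suf)"
  then show "face j (walk n a w) = walk n b (pre @ t # suf)"
    using face_walk_merge unfolding splits_def by auto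
qed

lemma sum_words_merged:
  assumes "set pre \<subseteq> S" "set suf \<subseteq> S" "length pre + length suf + 2 = m"
  shows "(\<Sum>w\<in>words S m. if \<exists>(s, s')\<in>splits S t. w = pre @ s # s' # suf then f w else 0) =
    (\<Sum>(s, s')\<in>splits S t. f (pre @ s # s' # suf))"
proof -
  let ?merge = "\<lambda>(s, s'). pre @ s # s' # suf"
  have "{w \<in> words S m. \<exists>(s, s')\<in>splits S t. w = pre @ s # s' # suf} = ?merge ` splits S t"
    using assms unfolding words_def splits_def by auto
  moreover have "inj_on ?merge (splits S t)"
    by (auto simp: inj_on_def)
  ultimately show ?thesis
    by (simp add: sum.inter_filter[OF finite_words[OF finite_steps], symmetric] sum.reindex
        prod.case_distrib)
qed

lemma boundary_at_merged_walk:
  assumes u: "u \<in> A_eig n S m lam" and b: "b < n"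
    and pre: "set pre \<subseteq> S" and suf: "set suf \<subseteq> S" and len: "length pre + length suf + 2 = m"
    and t: "t \<notin> S" "0 < t" "t < n"
  shows "boundary n m u (walk n b (pre @ t # suf)) = (-1) ^ Suc (length pre) * inverse lam ^ b *
    (\<Sum>(s, s')\<in>splits S t. walk_coeff n S m u (pre @ s # s' # suf))"
proof -
  define q where "q = walk n b (pre @ t # suf)"
  define k where "k = Suc (length pre)"
  define merges where "merges w \<longleftrightarrow> (\<exists>(s, s')\<in>splits S t. w = pre @ s # s' # suf)" for w
  define F where "F a w j = (-1) ^ j * (inverse lam ^ a * walk_coeff n S m u w)" for a w j
  have "insert t S \<subseteq> {0<..<n}"
    using t steps_bounds by auto
  moreover have "set (pre @ t # suf) \<subseteq> {..<n}"
    using steps_lt[OF pre] steps_lt[OF suf] t by auto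
  ultimately have "allowed n (insert t S) q"
    unfolding q_def using allowed_walk_iff[OF b] pre suf by auto
  then have "regular q"
    unfolding allowed_def by simp
  have inner: "(\<Sum>j\<le>m. if face j (walk n a w) = q then F a w j else 0) =
      (if a = b \<and> merges w then F a w k else 0)" if "a < n" "w \<in> words S m" for a w
  proof -
    have "(\<Sum>j\<le>m. if face j (walk n a w) = q then F a w j else 0) =
        (\<Sum>j\<le>m. if j = k then (if a = b \<and> merges w then F a w j else 0) else 0)"
      using face_walk_eq_merged_iff[OF that _ b pre suf t(1,3)]
      unfolding q_def k_def merges_def by (intro sum.cong refl) auto
    also have "\<dots> = (if a = b \<and> merges w then F a w k else 0)"
      using len unfolding k_def by simp
    finally show ?thesis .
  qed
  have "boundary n m u q = (\<Sum>a<n. \<Sum>w\<in>words S m. if a = b \<and> merges w then F a w k else 0)"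
    unfolding boundary_A_eig[OF u \<open>regular q\<close>] F_def[symmetric] using inner by simp
  also have "\<dots> = (\<Sum>a<n. if a = b then (\<Sum>w\<in>words S m. if merges w then F b w k else 0) else 0)"
    by (intro sum.cong refl) auto
  also have "\<dots> = (\<Sum>w\<in>words S m. if merges w then F b w k else 0)"
    using b by simp
  also have "\<dots> = (-1) ^ k * inverse lam ^ b * (\<Sum>w\<in>words S m. if merges w then walk_coeff n S m u w else 0)"
    unfolding F_def by (simp add: sum_distrib_left if_distrib mult.assoc cong: if_cong)
  finally show ?thesis
    unfolding q_def k_def merges_def sum_words_merged[OF pre suf len] .
qed

lemma boundary_in_A_space_iff:
  assumes u: "u \<in> A_eig n S m lam" and m: "0 < m"
  shows "boundary n m u \<in> A_space n S (m - 1) \<longleftrightarrow> merge_relations S m (walk_coeff n S m u)"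
proof
  assume bA: "boundary n m u \<in> A_space n S (m - 1)"
  show "merge_relations S m (walk_coeff n S m u)"
    unfolding merge_relations_def
  proof (intro allI impI)
    fix pre suf t
    assume pre: "set pre \<subseteq> S" and suf: "set suf \<subseteq> S"
      and len: "length pre + length suf + 2 = m" and t: "t \<notin> S"
    show "(\<Sum>(s, s')\<in>splits S t. walk_coeff n S m u (pre @ s # s' # suf)) = 0"
    proof (cases "splits S t = {}")
      case False
      then have t_bounds: "0 < t" "t < n"
        using splits_bounds by auto
      have "\<not> allowed n S (walk n 0 (pre @ t # suf))"
        using allowed_walk_iff[OF n_pos _ steps_bounds] steps_lt[OF pre] steps_lt[OF suf] t t_bounds
        by auto
      then have "boundary n m u (walk n 0 (pre @ t # suf)) = 0"
        using bA unfolding A_space_def by blast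
      then show ?thesis
        using boundary_at_merged_walk[OF u n_pos pre suf len t t_bounds] by simp
    qed simp
  qed
next
  assume rel: "merge_relations S m (walk_coeff n S m u)"
  show "boundary n m u \<in> A_space n S (m - 1)"
    unfolding A_space_def
  proof (intro CollectI allI impI)
    fix q
    assume bq: "boundary n m u q \<noteq> 0"
    then have "regular q"
      unfolding boundary_def by (rule contrapos_np) simp
    with bq obtain a w j where a: "a < n" and w: "w \<in> words S m" and j: "j \<le> m"
      and q: "face j (walk n a w) = q"
      unfolding boundary_A_eig[OF u \<open>regular q\<close>]
      by (elim sum.not_neutral_contains_not_neutral) (auto split: if_splits)
    have ws: "set w \<subseteq> S" "length w = m"
      using w unfolding words_def by auto
    have "length q = Suc (m - 1)"
      using length_face[of j "walk n a w"] q j ws(2) m by simp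
    moreover have "allowed n S q"
    proof -
      have "w \<noteq> []" "j \<le> length w"
        using ws(2) j m by auto
      then show ?thesis
      proof (cases rule: face_walk_cases[where n = n and a = a])
        case (first s v)
        then show ?thesis
          using q ws(1) allowed_walk[of "(a + s) mod n" v] n_pos by simp
      next
        case last
        then show ?thesis
          using q ws(1) allowed_walk[OF a, of "butlast w"] by (auto dest: in_set_butlastD)
      next
        case (merge pre s s' suf)
        have steps: "s \<in> S" "s' \<in> S" "set pre \<subseteq> S" "set suf \<subseteq> S"
          using ws(1) merge(1) by auto
        show ?thesis
        proof (cases "s + s' \<in> S")
          case True
          then show ?thesis
            using q merge(3) steps allowed_walk[OF a, of "pre @ (s + s') # suf"] by simp
        next
          case False
          have len: "length pre + length suf + 2 = m"
            using merge(1) ws(2) by simp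
          have "(s, s') \<in> splits S (s + s')"
            using steps unfolding splits_def by simp
          then have bounds: "0 < s + s'" "s + s' < n"
            using splits_bounds by blast+
          have "(\<Sum>(r, r')\<in>splits S (s + s'). walk_coeff n S m u (pre @ r # r' # suf)) = 0"
            using rel steps(3,4) len False unfolding merge_relations_def by blast
          moreover have "q = walk n a (pre @ (s + s') # suf)"
            using q merge(3) by simp
          ultimately have "boundary n m u q = 0"
            using boundary_at_merged_walk[OF u a steps(3,4) len False bounds] by simp
          with bq show ?thesis
            by simp
        qed
      qed
    qed
    ultimately show "length q = Suc (m - 1) \<and> allowed n S q"
      by simp
  qed
qed

lemma Omega_eig_iff:
  "0 < m \<Longrightarrow>
    u \<in> Omega_eig n S m lam \<longleftrightarrow> u \<in> A_eig n S m lam \<and> merge_relations S m (walk_coeff n S m u)"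
  using boundary_in_A_space_iff unfolding Omega_eig_def Omega_def A_eig_def by auto

end

section \<open>Inversions and swap-antisymmetric functions of words\<close>

lemma inversion_pairs_Cons:
  "{(i, j). i < j \<and> j < length (x # w) \<and> (x # w) ! i > (x # w) ! j} =
   (\<lambda>j. (0, Suc j)) ` {j. j < length w \<and> w ! j < x} \<union>
   (\<lambda>(i, j). (Suc i, Suc j)) ` {(i, j). i < j \<and> j < length w \<and> w ! i > w ! j}"
  (is "?L = ?A \<union> ?B")
proof (intro equalityI subsetI)
  fix p
  assume p: "p \<in> ?L"
  then obtain i j where ij: "p = (i, j)" "i < j"
    by auto
  then obtain j' where j': "j = Suc j'"
    by (cases j) auto
  show "p \<in> ?A \<union> ?B"
  proof (cases i)
    case 0
    then show ?thesis
      using p ij j' by auto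
  next
    case (Suc i')
    then have "(i', j') \<in> {(i, j). i < j \<and> j < length w \<and> w ! i > w ! j}"
      using p ij j' by auto
    then show ?thesis
      using ij j' Suc by (auto intro: image_eqI[where x = "(i', j')"])
  qed
qed auto

lemma inv_Cons: "inv (x # w) = length (filter (\<lambda>y. y < x) w) + inv w"
proof -
  let ?A = "(\<lambda>j. (0::nat, Suc j)) ` {j. j < length w \<and> w ! j < x}"
  let ?P = "{(i, j). i < j \<and> j < length w \<and> w ! i > w ! j}"
  have "finite ?P"
    by (rule finite_subset[of _ "{..<length w} \<times> {..<length w}"]) auto
  then have "inv (x # w) = card ?A + card ((\<lambda>(i, j). (Suc i, Suc j)) ` ?P)"
    unfolding inv_def inversion_pairs_Cons by (subst card_Un_disjoint) auto
  also have "\<dots> = length (filter (\<lambda>y. y < x) w) + inv w"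
    unfolding inv_def
    by (subst card_image, force simp: inj_on_def)+ (simp add: length_filter_conv_card)
  finally show ?thesis .
qed

lemma inv_Nil [simp]: "inv [] = 0"
  by (simp add: inv_def)

lemma inv_sorted: "sorted w \<Longrightarrow> inv w = 0"
proof (induction w)
  case (Cons x w)
  then have "filter (\<lambda>y. y < x) w = []"
    by (auto simp: filter_empty_conv)
  with Cons show ?case
    by (simp add: inv_Cons)
qed simp

lemma inv_swap:
  assumes "x \<noteq> y"
  shows "((-1)::'a::comm_ring_1) ^ inv (pre @ x # y # suf) = - ((-1) ^ inv (pre @ y # x # suf))"
proof (induction pre)
  case Nil
  from assms show ?case
    by (auto simp: inv_Cons power_add mult_ac)
next
  case (Cons a pre)
  have "length (filter (\<lambda>z. z < a) (pre @ x # y # suf)) =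
      length (filter (\<lambda>z. z < a) (pre @ y # x # suf))"
    by simp
  with Cons show ?case
    by (simp add: inv_Cons power_add)
qed

definition swap_antisymmetric :: "('b list \<Rightarrow> 'a::ring_1) \<Rightarrow> bool" where
  "swap_antisymmetric c \<longleftrightarrow>
     (\<forall>pre suf x y. x \<noteq> y \<longrightarrow> c (pre @ x # y # suf) = - c (pre @ y # x # suf))"

lemma swap_antisymmetric_Cons: "swap_antisymmetric c \<Longrightarrow> swap_antisymmetric (\<lambda>w. c (a # w))"
  unfolding swap_antisymmetric_def by (metis append_Cons)

lemma swap_antisymmetric_insort:
  assumes "sorted v" "swap_antisymmetric c"
  shows "c (x # v) = (-1) ^ length (filter (\<lambda>y. y < x) v) * c (insort x v)"
  using assms
proof (induction v arbitrary: c)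
  case (Cons y v)
  show ?case
  proof (cases "x \<le> y")
    case True
    then have "filter (\<lambda>z. z < x) (y # v) = []"
      using Cons.prems(1) by (auto simp: filter_empty_conv)
    with True show ?thesis
      by simp
  next
    case False
    then have "c (x # y # v) = - c (y # x # v)"
      using Cons.prems(2) unfolding swap_antisymmetric_def by (metis append_Nil order_refl)
    moreover have "c (y # x # v) = (-1) ^ length (filter (\<lambda>z. z < x) v) * c (y # insort x v)"
      using Cons.IH[of "\<lambda>w. c (y # w)"] Cons.prems swap_antisymmetric_Cons[OF Cons.prems(2)]
      by simp
    ultimately show ?thesis
      using False by (auto simp: not_le)
  qed
qed simp

lemma swap_antisymmetric_sort:
  fixes c :: "nat list \<Rightarrow> 'a::comm_ring_1"
  shows "swap_antisymmetric c \<Longrightarrow> c w = (-1) ^ inv w * c (sort w)"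
proof (induction w arbitrary: c)
  case (Cons x w)
  have "c (x # w) = (-1) ^ inv w * c (x # sort w)"
    using Cons.IH[of "\<lambda>v. c (x # v)"] swap_antisymmetric_Cons[OF Cons.prems] by simp
  also have "c (x # sort w) = (-1) ^ length (filter (\<lambda>y. y < x) (sort w)) * c (insort x (sort w))"
    using swap_antisymmetric_insort[OF sorted_sort Cons.prems] .
  also have "length (filter (\<lambda>y. y < x) (sort w)) = length (filter (\<lambda>y. y < x) w)"
    by (metis mset_filter mset_sort size_mset)
  finally show ?case
    by (simp add: inv_Cons power_add mult_ac)
qed simp

section \<open>Words in the letters 1, 2, 5\<close>

definition word_content :: "nat \<Rightarrow> nat \<Rightarrow> nat \<Rightarrow> nat multiset" where
  "word_content m a b = replicate_mset (m - a - b) 1 + replicate_mset a 2 + replicate_mset b 5"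

definition sorted_word :: "nat \<Rightarrow> nat \<Rightarrow> nat \<Rightarrow> nat list" where
  "sorted_word m a b = replicate (m - a - b) 1 @ replicate a 2 @ replicate b 5"

definition shuffle_sign :: "nat multiset \<Rightarrow> nat list \<Rightarrow> 'a::comm_ring_1" where
  "shuffle_sign M w = (if mset w = M then (-1) ^ inv w else 0)"

lemma mset_sorted_word: "mset (sorted_word m a b) = word_content m a b"
  by (simp add: sorted_word_def word_content_def)

lemma sorted_sorted_word: "sorted (sorted_word m a b)"
  by (auto simp: sorted_word_def sorted_append)

lemma mset_125:
  assumes "set w \<subseteq> {1, 2, 5}"
  shows "mset w = word_content (length w) (count (mset w) 2) (count (mset w) 5)"
proof -
  have "mset w = replicate_mset (count (mset w) 1) 1 + replicate_mset (count (mset w) 2) 2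
      + replicate_mset (count (mset w) 5) 5" (is "_ = ?M")
  proof (rule multiset_eqI)
    fix x
    show "count (mset w) x = count ?M x"
      using assms by (cases "x \<in> {1, 2, 5}") (auto simp: count_eq_zero_iff)
  qed
  moreover from this have "length w = count (mset w) 1 + count (mset w) 2 + count (mset w) 5"
    by (metis size_mset size_union size_replicate_mset)
  ultimately show ?thesis
    unfolding word_content_def by simp
qed

lemma mset_eq_word_content_iff:
  "set w \<subseteq> {1, 2, 5} \<Longrightarrow>
    mset w = word_content (length w) a b \<longleftrightarrow> count (mset w) 2 = a \<and> count (mset w) 5 = b"
  using mset_125[of w] by (auto simp: word_content_def)

lemma sort_125: "set w \<subseteq> {1, 2, 5} \<Longrightarrow>
    sort w = sorted_word (length w) (count (mset w) 2) (count (mset w) 5)"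
  using mset_125 by (intro properties_for_sort) (simp_all add: mset_sorted_word sorted_sorted_word)

lemma words_if_mset_eq_word_content:
  assumes "mset w = word_content m a b" "a + b \<le> m"
  shows "w \<in> words {1, 2, 5} m"
proof -
  have "set w = set_mset (word_content m a b)"
    using assms(1) by (metis set_mset_mset)
  moreover have "length w = size (word_content m a b)"
    using assms(1) by (metis size_mset)
  ultimately show ?thesis
    using assms(2) unfolding words_def word_content_def by auto
qed

lemma shuffle_sign_swap_antisymmetric: "swap_antisymmetric (shuffle_sign M)"
  unfolding swap_antisymmetric_def
proof (intro allI impI)
  fix pre suf and x y :: nat
  assume "x \<noteq> y"
  have swap: "mset (pre @ x # y # suf) = mset (pre @ y # x # suf)"
    by simp
  show "shuffle_sign M (pre @ x # y # suf) = - shuffle_sign M (pre @ y # x # suf)"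
    unfolding shuffle_sign_def swap
    using inv_swap[OF \<open>x \<noteq> y\<close>, of pre suf] by (cases "mset (pre @ y # x # suf) = M") simp_all
qed

lemma shuffle_sign_repeat: "count M x \<le> 1 \<Longrightarrow> shuffle_sign M (pre @ x # x # suf) = 0"
  unfolding shuffle_sign_def by auto

lemma shuffle_sign_word_content:
  "set w \<subseteq> {1, 2, 5} \<Longrightarrow> shuffle_sign (word_content (length w) a b) w =
    (if count (mset w) 2 = a \<and> count (mset w) 5 = b then (-1) ^ inv w else 0)"
  unfolding shuffle_sign_def using mset_eq_word_content_iff by auto

lemma count_word_content [simp]:
  "count (word_content m a b) 2 = a" "count (word_content m a b) 5 = b"
  by (simp_all add: word_content_def)

lemma word_content_eq_iff: "word_content m a b = word_content m a' b' \<longleftrightarrow> a = a' \<and> b = b'"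
  by (metis count_word_content)

lemma shuffle_sign_sorted_word:
  "shuffle_sign (word_content m a b) (sorted_word m a' b') = (if a = a' \<and> b = b' then 1 else 0)"
  by (auto simp: shuffle_sign_def mset_sorted_word inv_sorted sorted_sorted_word word_content_eq_iff)

lemma splits_125:
  assumes "x \<in> {1, 2, 5}" "y \<in> {1, 2, 5}" "(x, y) \<noteq> (1, 1)"
  shows "x + y \<notin> {1, 2, 5}" "splits {1, 2, 5} (x + y) = {(x, y), (y, x)}"
  using assms unfolding splits_def by auto

lemma merge_relations_125_iff:
  fixes c :: "nat list \<Rightarrow> 'a::comm_ring_1"
  assumes supp: "\<And>w. w \<notin> words {1, 2, 5} m \<Longrightarrow> c w = 0"
  shows "merge_relations {1, 2, 5} m c \<longleftrightarrow>
    swap_antisymmetric c \<and> (\<forall>pre suf x. x \<in> {2, 5} \<longrightarrow> c (pre @ x # x # suf) = 0)"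
proof
  assume rel: "merge_relations {1, 2, 5} m c"
  have merged: "c (pre @ x # y # suf) + (if x = y then 0 else c (pre @ y # x # suf)) = 0"
    if "x \<in> {1, 2, 5}" "y \<in> {1, 2, 5}" "(x, y) \<noteq> (1, 1)" for pre suf x y
  proof (cases "pre @ x # y # suf \<in> words {1, 2, 5} m")
    case True
    then have "set pre \<subseteq> {1, 2, 5}" "set suf \<subseteq> {1, 2, 5}" "length pre + length suf + 2 = m"
      by (simp_all only: append_Cons_Cons_in_words_iff)
    then have "(\<Sum>(s, s')\<in>splits {1, 2, 5} (x + y). c (pre @ s # s' # suf)) = 0"
      using rel splits_125(1)[OF that] unfolding merge_relations_def by blast
    then show ?thesis
      unfolding splits_125(2)[OF that] by (cases "x = y") simp_all
  next
    case False
    then show ?thesis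
      using supp append_swap_in_words_iff by simp
  qed
  have "swap_antisymmetric c"
    unfolding swap_antisymmetric_def
  proof (intro allI impI)
    fix pre suf and x y :: nat
    assume "x \<noteq> y"
    show "c (pre @ x # y # suf) = - c (pre @ y # x # suf)"
    proof (cases "x \<in> {1, 2, 5} \<and> y \<in> {1, 2, 5}")
      case True
      with merged[of x y pre suf] \<open>x \<noteq> y\<close> show ?thesis
        by (simp add: eq_neg_iff_add_eq_0)
    next
      case False
      then have "pre @ x # y # suf \<notin> words {1, 2, 5} m" "pre @ y # x # suf \<notin> words {1, 2, 5} m"
        unfolding append_Cons_Cons_in_words_iff by blast+
      then show ?thesis
        using supp by simp
    qed
  qed
  moreover have "c (pre @ x # x # suf) = 0" if "x \<in> {2, 5}" for pre suf x
  proof -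
    have "x \<in> {1, 2, 5}" "(x, x) \<noteq> (1, 1)"
      using that by auto
    then show ?thesis
      using merged[of x x pre suf] by simp
  qed
  ultimately show "swap_antisymmetric c \<and> (\<forall>pre suf x. x \<in> {2, 5} \<longrightarrow> c (pre @ x # x # suf) = 0)"
    by blast
next
  assume "swap_antisymmetric c \<and> (\<forall>pre suf x. x \<in> {2, 5} \<longrightarrow> c (pre @ x # x # suf) = 0)"
  then have anti: "swap_antisymmetric c" and rep: "\<And>pre suf x. x \<in> {2, 5} \<Longrightarrow> c (pre @ x # x # suf) = 0"
    by auto
  show "merge_relations {1, 2, 5} m c"
    unfolding merge_relations_def
  proof (intro allI impI)
    fix pre suf and t :: nat
    assume "t \<notin> {1, 2, 5}"
    show "(\<Sum>(s, s')\<in>splits {1, 2, 5} t. c (pre @ s # s' # suf)) = 0"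
    proof (cases "splits {1, 2, 5} t = {}")
      case False
      then obtain x y where xy: "x \<in> {1, 2, 5}" "y \<in> {1, 2, 5}" "t = x + y"
        unfolding splits_def by auto
      with \<open>t \<notin> {1, 2, 5}\<close> have "(x, y) \<noteq> (1, 1)"
        by auto
      then have "splits {1, 2, 5} t = {(x, y), (y, x)}"
        using splits_125(2)[OF xy(1,2)] xy(3) by simp
      moreover have "c (pre @ x # y # suf) = - c (pre @ y # x # suf)" if "x \<noteq> y"
        using anti that unfolding swap_antisymmetric_def by blast
      moreover have "c (pre @ x # x # suf) = 0" if "x = y"
        using rep xy(1) \<open>(x, y) \<noteq> (1, 1)\<close> that by auto
      ultimately show ?thesis
        by (cases "x = y") auto
    qed simp
  qed
qed

lemma swap_antisymmetric_125_decomposition: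
  fixes c :: "nat list \<Rightarrow> 'a::comm_ring_1"
  assumes anti: "swap_antisymmetric c"
    and rep: "\<And>pre suf x. x \<in> {2, 5} \<Longrightarrow> c (pre @ x # x # suf) = 0"
    and w: "set w \<subseteq> {1, 2, 5}" and len: "length w = m"
  shows "c w = c (sorted_word m 0 0) * shuffle_sign (word_content m 0 0) w
    + c (sorted_word m 1 0) * shuffle_sign (word_content m 1 0) w
    + c (sorted_word m 0 1) * shuffle_sign (word_content m 0 1) w
    + c (sorted_word m 1 1) * shuffle_sign (word_content m 1 1) w"
proof -
  define a b where "a = count (mset w) 2" and "b = count (mset w) 5"
  have cw: "c w = c (sorted_word m a b) * (-1) ^ inv w"
    using swap_antisymmetric_sort[OF anti, of w] sort_125[OF w] len unfolding a_def b_def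
    by (simp add: mult.commute)
  have signs: "(shuffle_sign (word_content m a' b') w :: 'a) =
      (if a = a' \<and> b = b' then (-1) ^ inv w else 0)"
    for a' b'
    using shuffle_sign_word_content[OF w, of a' b'] unfolding len a_def b_def by simp
  show ?thesis
  proof (cases "a \<le> 1 \<and> b \<le> 1")
    case True
    then consider "a = 0" "b = 0" | "a = 1" "b = 0" | "a = 0" "b = 1" | "a = 1" "b = 1"
      by linarith
    then show ?thesis
      using cw signs[of 0 0] signs[of 1 0] signs[of 0 1] signs[of 1 1] by cases simp_all
  next
    case False
    have "c (sorted_word m a b) = 0"
    proof (cases "2 \<le> a")
      case True
      then obtain k where "a = k + 2"
        by (metis le_add_diff_inverse2)
      then have "sorted_word m a b = replicate (m - a - b) 1 @ 2 # 2 # replicate k 2 @ replicate b 5"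
        unfolding sorted_word_def by simp
      then show ?thesis
        using rep by simp
    next
      case False
      with \<open>\<not> (a \<le> 1 \<and> b \<le> 1)\<close> have "2 \<le> b"
        by linarith
      then obtain k where "b = k + 2"
        by (metis le_add_diff_inverse2)
      then have "sorted_word m a b = (replicate (m - a - b) 1 @ replicate a 2) @ 5 # 5 # replicate k 5"
        unfolding sorted_word_def by simp
      then show ?thesis
        using rep[of 5 "replicate (m - a - b) 1 @ replicate a 2"] by simp
    qed
    moreover have "(shuffle_sign (word_content m a' b') w :: 'a) = 0" if "a' \<le> 1" "b' \<le> 1" for a' b'
      using signs[of a' b'] False that by auto
    ultimately show ?thesis
      using cw by simp
  qed
qed

lemma mset_eq_replicate_mset_iff: "mset w = replicate_mset k x \<longleftrightarrow> w = replicate k x"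
proof
  assume w: "mset w = replicate_mset k x"
  then have "length w = k"
    by (metis size_mset size_replicate_mset)
  moreover have "set w = set_mset (replicate_mset k x)"
    using w by (metis set_mset_mset)
  then have "\<forall>y\<in>set w. y = x"
    by (simp split: if_splits)
  ultimately show "w = replicate k x"
    using replicate_length_same[of w x] by simp
qed simp

lemma set_word_i: "set (word_i m s i) \<subseteq> {1, s}"
  unfolding word_i_def by auto

lemma length_word_i: "i < m \<Longrightarrow> length (word_i m s i) = m"
  unfolding word_i_def by simp

lemma mset_word_i: "i < m \<Longrightarrow> mset (word_i m s i) = replicate_mset (m - 1) 1 + {#s#}"
  unfolding word_i_def by (rule multiset_eqI) auto

lemma nth_word_i: "k < m \<Longrightarrow> i < m \<Longrightarrow> word_i m s i ! k = (if k = i then s else 1)"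
  unfolding word_i_def by (auto simp: nth_append)

lemma word_i_inj: "s \<noteq> 1 \<Longrightarrow> i < m \<Longrightarrow> j < m \<Longrightarrow> word_i m s i = word_i m s j \<Longrightarrow> i = j"
  using nth_word_i[of i m i s] nth_word_i[of i m j s] by metis

lemma inv_word_i: "1 < s \<Longrightarrow> inv (word_i m s i) = m - 1 - i"
proof -
  assume "1 < s"
  have "inv (replicate k 1 @ v) = inv v" if "\<forall>y\<in>set v. 1 \<le> y" for k v
    using that by (induction k) (auto simp: inv_Cons filter_empty_conv)
  then have "inv (word_i m s i) = inv (s # replicate (m - 1 - i) 1)"
    unfolding word_i_def using \<open>1 < s\<close> by simp
  also have "\<dots> = m - 1 - i"
    using \<open>1 < s\<close> by (simp add: inv_Cons inv_sorted)
  finally show ?thesis .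
qed

lemma mset_eq_word_i:
  assumes "mset w = replicate_mset (m - 1) 1 + {#s#}" "s \<noteq> 1" "0 < m"
  shows "\<exists>i<m. w = word_i m s i"
proof -
  have "s \<in># mset w"
    using assms(1) by simp
  then have "s \<in> set w"
    by simp
  then obtain xs ys where w: "w = xs @ s # ys"
    by (meson split_list)
  then have "mset (xs @ ys) = replicate_mset (m - 1) 1"
    using assms(1) by simp
  then have ones: "xs @ ys = replicate (m - 1) 1"
    by (simp only: mset_eq_replicate_mset_iff)
  then have "length xs + length ys = m - 1"
    by (metis length_append length_replicate)
  then have "xs = replicate (length xs) 1" "ys = replicate (m - 1 - length xs) 1" "length xs < m"
    using arg_cong[OF ones, of "take (length xs)"] arg_cong[OF ones, of "drop (length xs)"] assms(3)
    by simp_all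
  with w show ?thesis
    unfolding word_i_def by auto
qed

section \<open>The eigenspaces of \<open>\<Omega>\<^sub>m\<close> for the steps 1, 2, 5\<close>

locale circulant_125 = circulant n "{1, 2, 5}" lam
  for n :: nat and lam :: "'a::field" +
  fixes m :: nat
  assumes two_le_m: "2 \<le> m"
begin

lemma word_i_in_words: "i < m \<Longrightarrow> s \<in> {1, 2, 5} \<Longrightarrow> word_i m s i \<in> words {1, 2, 5} m"
  using set_word_i[of m s i] length_word_i[of i m s] unfolding words_def by auto

lemma Sh_subset_words: "Sh m \<subseteq> words {1, 2, 5} m"
proof
  fix w
  assume w: "w \<in> Sh m"
  then have "set w = set_mset (replicate_mset (m - 2) 1 + {#2, 5#})"
    unfolding Sh_def by (metis (mono_tags) mem_Collect_eq set_mset_mset)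
  then have "set w \<subseteq> {1, 2, 5}"
    by auto
  with w show "w \<in> words {1, 2, 5} m"
    unfolding Sh_def words_def by simp
qed

lemma ones_in_words: "replicate m 1 \<in> words {1, 2, 5} m"
  by (auto simp: words_def)

lemma Amw_in_A_eig: "Amw n lam m \<in> A_eig n {1, 2, 5} m lam"
  unfolding Amw_def by (rule fw_in_A_eig[OF ones_in_words])

lemma Bsw_in_A_eig: "s \<in> {1, 2, 5} \<Longrightarrow> Bsw n lam s m \<in> A_eig n {1, 2, 5} m lam"
  unfolding Bsw_def by (intro fw_lincomb_in_A_eig word_i_in_words) simp_all

lemma Dmw_in_A_eig: "Dmw n lam m \<in> A_eig n {1, 2, 5} m lam"
  unfolding Dmw_def using Sh_subset_words by (intro fw_lincomb_in_A_eig) auto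

lemma walk_coeff_Amw: "walk_coeff n {1, 2, 5} m (Amw n lam m) = shuffle_sign (word_content m 0 0)"
proof
  fix w :: "nat list"
  have "mset w = replicate_mset m 1 \<longleftrightarrow> w = replicate m 1"
    by (rule mset_eq_replicate_mset_iff)
  moreover have "inv (replicate m (1::nat)) = 0"
    by (simp add: inv_sorted)
  ultimately show "walk_coeff n {1, 2, 5} m (Amw n lam m) w = shuffle_sign (word_content m 0 0) w"
    unfolding Amw_def walk_coeff_fw[OF ones_in_words] shuffle_sign_def word_content_def by auto
qed

lemma walk_coeff_Bsw:
  assumes s: "s \<in> {2, 5}"
  shows "walk_coeff n {1, 2, 5} m (Bsw n lam s m) = shuffle_sign (replicate_mset (m - 1) 1 + {#s#})"
proof
  fix w :: "nat list"
  have "walk_coeff n {1, 2, 5} m (Bsw n lam s m) w = (\<Sum>i<m. if w = word_i m s i then (-1) ^ (m - 1 - i) else 0)"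
    unfolding Bsw_def
    by (rule walk_coeff_fw_lincomb[where I = "{..<m}" and ws = "word_i m s"
          and k = "\<lambda>i. (-1) ^ (m - 1 - i)"])
      (rule word_i_in_words; use s in auto)
  also have "\<dots> = shuffle_sign (replicate_mset (m - 1) 1 + {#s#}) w"
  proof (cases "mset w = replicate_mset (m - 1) 1 + {#s#}")
    case True
    have "s \<noteq> 1" "0 < m"
      using s two_le_m by auto
    then obtain i where i: "i < m" "w = word_i m s i"
      using mset_eq_word_i[OF True] by blast
    have "w = word_i m s j \<longleftrightarrow> j = i" if "j < m" for j
      using i word_i_inj[of s i m j] s that by auto
    then have "(\<Sum>j<m. if w = word_i m s j then (-1) ^ (m - 1 - j) else 0) =
        (\<Sum>j<m. if j = i then (-1) ^ (m - 1 - j) else (0::'a))"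
      by (intro sum.cong) auto
    also have "\<dots> = (-1) ^ (m - 1 - i)"
      using i(1) by simp
    finally have "(\<Sum>j<m. if w = word_i m s j then (-1) ^ (m - 1 - j) else 0) = ((-1) ^ (m - 1 - i) :: 'a)" .
    moreover have "inv w = m - 1 - i"
      using i(2) inv_word_i[of s m i] s by auto
    ultimately show ?thesis
      using True unfolding shuffle_sign_def by simp
  next
    case False
    then have "w \<noteq> word_i m s j" if "j < m" for j
      using mset_word_i[OF that] by auto
    with False show ?thesis
      unfolding shuffle_sign_def by simp
  qed
  finally show "walk_coeff n {1, 2, 5} m (Bsw n lam s m) w = shuffle_sign (replicate_mset (m - 1) 1 + {#s#}) w" .
qed

lemma walk_coeff_Dmw: "walk_coeff n {1, 2, 5} m (Dmw n lam m) = shuffle_sign (word_content m 1 1)"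
proof
  fix w :: "nat list"
  have "walk_coeff n {1, 2, 5} m (Dmw n lam m) w = (\<Sum>v\<in>Sh m. if w = v then (-1) ^ inv v else 0)"
    unfolding Dmw_def
    by (rule walk_coeff_fw_lincomb[where I = "Sh m" and ws = "\<lambda>v. v" and k = "\<lambda>v. (-1) ^ inv v"])
      (use Sh_subset_words in auto)
  also have "\<dots> = (if w \<in> Sh m then (-1) ^ inv w else 0)"
    using finite_subset[OF Sh_subset_words finite_words[OF finite_steps]] by (simp add: sum.delta)
  also have "\<dots> = shuffle_sign (word_content m 1 1) w"
  proof -
    have "m - 1 - 1 = m - 2"
      by simp
    then have content: "word_content m 1 1 = replicate_mset (m - 2) 1 + {#2, 5#}"
      unfolding word_content_def by simp
    have "length w = m" if "mset w = word_content m 1 1"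
    proof -
      have "length w = size (mset w)"
        by simp
      also have "\<dots> = m"
        using that two_le_m unfolding content by simp
      finally show ?thesis .
    qed
    then have "w \<in> Sh m \<longleftrightarrow> mset w = word_content m 1 1"
      unfolding Sh_def content by auto
    then show ?thesis
      unfolding shuffle_sign_def by simp
  qed
  finally show "walk_coeff n {1, 2, 5} m (Dmw n lam m) w = shuffle_sign (word_content m 1 1) w" .
qed

lemma word_content_1_0: "word_content m 1 0 = replicate_mset (m - 1) 1 + {#2#}"
  and word_content_0_1: "word_content m 0 1 = replicate_mset (m - 1) 1 + {#5#}"
  by (simp_all add: word_content_def)

lemma walk_coeff_generators:
  "walk_coeff n {1, 2, 5} m (Amw n lam m) = shuffle_sign (word_content m 0 0)"
  "walk_coeff n {1, 2, 5} m (Bsw n lam 2 m) = shuffle_sign (word_content m 1 0)"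
  "walk_coeff n {1, 2, 5} m (Bsw n lam 5 m) = shuffle_sign (word_content m 0 1)"
  "walk_coeff n {1, 2, 5} m (Dmw n lam m) = shuffle_sign (word_content m 1 1)"
  by (rule walk_coeff_Amw, unfold word_content_1_0 word_content_0_1,
      (rule walk_coeff_Bsw, simp)+, rule walk_coeff_Dmw)

lemma shuffle_sign_chain_in_Omega_eig:
  assumes g: "g \<in> A_eig n {1, 2, 5} m lam" and coeff: "walk_coeff n {1, 2, 5} m g = shuffle_sign M"
    and "count M 2 \<le> 1" "count M 5 \<le> 1"
  shows "g \<in> Omega_eig n {1, 2, 5} m lam"
proof -
  have supp: "(shuffle_sign M w :: 'a) = 0" if "w \<notin> words {1, 2, 5} m" for w
    using that fun_cong[OF coeff, of w] unfolding walk_coeff_def by simp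
  have "\<forall>pre suf x. x \<in> {2, 5} \<longrightarrow> (shuffle_sign M (pre @ x # x # suf) :: 'a) = 0"
    using shuffle_sign_repeat assms(3,4) by auto
  with shuffle_sign_swap_antisymmetric have "merge_relations {1, 2, 5} m (shuffle_sign M :: nat list \<Rightarrow> 'a)"
    by (intro merge_relations_125_iff[OF supp, THEN iffD2] conjI)
  then have "merge_relations {1, 2, 5} m (walk_coeff n {1, 2, 5} m g)"
    unfolding coeff .
  moreover have "0 < m"
    using two_le_m by simp
  ultimately show ?thesis
    using Omega_eig_iff g by blast
qed

lemma generators_in_Omega_eig:
  "{Amw n lam m, Bsw n lam 2 m, Bsw n lam 5 m, Dmw n lam m} \<subseteq> Omega_eig n {1, 2, 5} m lam"
  using shuffle_sign_chain_in_Omega_eig[OF Amw_in_A_eig walk_coeff_generators(1)]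
    shuffle_sign_chain_in_Omega_eig[OF Bsw_in_A_eig walk_coeff_generators(2)]
    shuffle_sign_chain_in_Omega_eig[OF Bsw_in_A_eig walk_coeff_generators(3)]
    shuffle_sign_chain_in_Omega_eig[OF Dmw_in_A_eig walk_coeff_generators(4)]
  by simp

lemma Omega_eig_subset_span:
  "Omega_eig n {1, 2, 5} m lam \<subseteq> chain.span {Amw n lam m, Bsw n lam 2 m, Bsw n lam 5 m, Dmw n lam m}"
proof
  fix u
  assume u: "u \<in> Omega_eig n {1, 2, 5} m lam"
  define c where "c = walk_coeff n {1, 2, 5} m u"
  have u_eig: "u \<in> A_eig n {1, 2, 5} m lam" and "merge_relations {1, 2, 5} m c"
    using u Omega_eig_iff two_le_m unfolding c_def by auto
  moreover have supp: "c w = 0" if "w \<notin> words {1, 2, 5} m" for w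
    using that unfolding c_def walk_coeff_def by simp
  ultimately have anti: "swap_antisymmetric c" and rep: "\<And>pre suf x. x \<in> {2, 5} \<Longrightarrow> c (pre @ x # x # suf) = 0"
    using merge_relations_125_iff[of m c] by blast+
  define v where "v = chain_scale (c (sorted_word m 0 0)) (Amw n lam m)
    + chain_scale (c (sorted_word m 1 0)) (Bsw n lam 2 m)
    + chain_scale (c (sorted_word m 0 1)) (Bsw n lam 5 m)
    + chain_scale (c (sorted_word m 1 1)) (Dmw n lam m)"
  have "v \<in> A_eig n {1, 2, 5} m lam"
    unfolding v_def using Amw_in_A_eig Bsw_in_A_eig Dmw_in_A_eig
    by (intro chain.subspace_add[OF subspace_A_eig] chain.subspace_scale[OF subspace_A_eig]) auto
  moreover have "walk_coeff n {1, 2, 5} m v = c"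
  proof
    fix w
    have "walk_coeff n {1, 2, 5} m v w =
        c (sorted_word m 0 0) * shuffle_sign (word_content m 0 0) w
      + c (sorted_word m 1 0) * shuffle_sign (word_content m 1 0) w
      + c (sorted_word m 0 1) * shuffle_sign (word_content m 0 1) w
      + c (sorted_word m 1 1) * shuffle_sign (word_content m 1 1) w"
      unfolding v_def walk_coeff_add walk_coeff_scale walk_coeff_generators ..
    also have "\<dots> = c w"
    proof (cases "w \<in> words {1, 2, 5} m")
      case True
      then show ?thesis
        using swap_antisymmetric_125_decomposition[OF anti rep] unfolding words_def by simp
    next
      case False
      then have "(shuffle_sign (word_content m a b) w :: 'a) = 0" if "a + b \<le> m" for a b
        using that words_if_mset_eq_word_content unfolding shuffle_sign_def by auto
      with False show ?thesis
        using supp two_le_m by simp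
    qed
    finally show "walk_coeff n {1, 2, 5} m v w = c w" .
  qed
  ultimately have "u = v"
    using A_eig_eqI[OF u_eig] unfolding c_def by simp
  moreover have "v \<in> chain.span {Amw n lam m, Bsw n lam 2 m, Bsw n lam 5 m, Dmw n lam m}"
    unfolding v_def by (intro chain.span_add chain.span_scale chain.span_base) auto
  ultimately show "u \<in> chain.span {Amw n lam m, Bsw n lam 2 m, Bsw n lam 5 m, Dmw n lam m}"
    by simp
qed

lemma value_at_sorted_word:
  assumes "walk_coeff n {1, 2, 5} m g = shuffle_sign (word_content m a b)" "a' + b' \<le> m"
  shows "g (walk n 0 (sorted_word m a' b')) = (if a = a' \<and> b = b' then 1 else 0)"
proof -
  have "sorted_word m a' b' \<in> words {1, 2, 5} m"
    using words_if_mset_eq_word_content[OF mset_sorted_word assms(2)] .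
  then have "g (walk n 0 (sorted_word m a' b')) = walk_coeff n {1, 2, 5} m g (sorted_word m a' b')"
    unfolding walk_coeff_def by simp
  then show ?thesis
    unfolding assms(1) shuffle_sign_sorted_word .
qed

lemma independent_generators:
  "chain.independent {Amw n lam m, Bsw n lam 2 m, Bsw n lam 5 m, Dmw n lam m}"
  "card {Amw n lam m, Bsw n lam 2 m, Bsw n lam 5 m, Dmw n lam m} = 4"
proof -
  define p where "p a b = walk n 0 (sorted_word m a b)" for a b
  have small: "0 + 0 \<le> m" "1 + 0 \<le> m" "0 + 1 \<le> m" "1 + 1 \<le> m"
    using two_le_m by simp_all
  have table:
    "Amw n lam m (p 0 0) = 1" "Amw n lam m (p 1 0) = 0" "Amw n lam m (p 0 1) = 0" "Amw n lam m (p 1 1) = 0"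
    "Bsw n lam 2 m (p 0 0) = 0" "Bsw n lam 2 m (p 1 0) = 1" "Bsw n lam 2 m (p 0 1) = 0" "Bsw n lam 2 m (p 1 1) = 0"
    "Bsw n lam 5 m (p 0 0) = 0" "Bsw n lam 5 m (p 1 0) = 0" "Bsw n lam 5 m (p 0 1) = 1" "Bsw n lam 5 m (p 1 1) = 0"
    "Dmw n lam m (p 0 0) = 0" "Dmw n lam m (p 1 0) = 0" "Dmw n lam m (p 0 1) = 0" "Dmw n lam m (p 1 1) = 1"
    unfolding p_def
    using value_at_sorted_word[OF walk_coeff_generators(1)] value_at_sorted_word[OF walk_coeff_generators(2)]
      value_at_sorted_word[OF walk_coeff_generators(3)] value_at_sorted_word[OF walk_coeff_generators(4)]
      small by simp_all
  then show "chain.independent {Amw n lam m, Bsw n lam 2 m, Bsw n lam 5 m, Dmw n lam m}"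
    by (intro independent_if_private_points) (auto intro: exI[of _ "p 0 0"] exI[of _ "p 1 0"] exI[of _ "p 0 1"] exI[of _ "p 1 1"])
  from table show "card {Amw n lam m, Bsw n lam 2 m, Bsw n lam 5 m, Dmw n lam m} = 4"
    by (simp add: card_insert_if) (metis zero_neq_one)
qed

end

theorem mainTheorem16:
  fixes n m :: nat and lam :: "'a::field_char_0"
  assumes "n > 10"
    and "\<exists>\<zeta>::'a. \<zeta> ^ n = 1 \<and> (\<forall>k. 0 < k \<and> k < n \<longrightarrow> \<zeta> ^ k \<noteq> 1)"
    and "lam ^ n = 1"
    and "m \<ge> 2"
  shows "Omega_eig n {1, 2, 5} m lam =
           module.span chain_scale {Amw n lam m, Bsw n lam 2 m, Bsw n lam 5 m, Dmw n lam m}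
         \<and> vector_space.dim chain_scale (Omega_eig n {1, 2, 5} m lam) = 4"
proof -
  interpret circulant_125 n lam m
    by unfold_locales (use assms(1,3,4) in auto)
  have "Omega_eig n {1, 2, 5} m lam = chain.span {Amw n lam m, Bsw n lam 2 m, Bsw n lam 5 m, Dmw n lam m}"
    using Omega_eig_subset_span chain.span_minimal[OF generators_in_Omega_eig subspace_Omega_eig]
    by blast
  moreover from this have "chain.dim (Omega_eig n {1, 2, 5} m lam) = 4"
    using chain.dim_span_eq_card_independent[OF independent_generators(1)] independent_generators(2)
    by simp
  ultimately show ?thesis
    by simp
qed

end
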